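(* Let $d\ge1$ and $1<p_1<p<p_2<\infty$. Then there exist Young functions $\Phi$ and $\Psi$ with $q_\Phi<p_1$, $p_\Psi>p_2$, and $L^\Phi(\mathbb R^d)=L^\Psi(\mathbb R^d)=L^p(\mathbb R^d)$.
   Context: A Young function is a convex function $\Phi:[0,\infty)\to[0,\infty)$ with $\Phi(0)=0$, $\Phi(t)>0$ for $t>0$, and $\lim_{t\to\infty}\Phi(t)=\infty$. $\Phi'$ denotes the right derivative of $\Phi$. The Lebesgue exponents of $\Phi$ are $p_\Phi=\sup_{t>0}\frac{t\Phi'(t)}{\Phi(t)}$ and $q_\Phi=\inf_{t>0}\frac{t\Phi'(t)}{\Phi(t)}$. For a measurable $f$ on $\mathbb R^d$, $\rho_\Phi(f)=\int_{\mathbb R^d}\Phi(|f(x)|)\,dx$, the Luxemburg norm is $\|f\|_{L^\Phi}=\inf\{\lambda>0:\rho_\Phi(f/\lambda)\le1\}$, and the Orlicz space $L^\Phi(\mathbb R^d)$ consists of (classes of) measurable $f$ with $\|f\|_{L^\Phi}<\infty$. *)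

theory Defs
  imports "HOL-Analysis.Analysis"
begin

definition young_function :: "(real \<Rightarrow> real) \<Rightarrow> bool" where
  "young_function \<Phi> \<longleftrightarrow>
     convex_on {0..} \<Phi> \<and> \<Phi> 0 = 0 \<and> (\<forall>t>0. \<Phi> t > 0) \<and> filterlim \<Phi> at_top at_top"

definition right_deriv :: "(real \<Rightarrow> real) \<Rightarrow> real \<Rightarrow> real" where
  "right_deriv \<Phi> t = Lim (at_right t) (\<lambda>s. (\<Phi> s - \<Phi> t) / (s - t))"

text \<open>Lebesgue exponents (as in the paper: p is the sup, q is the inf); values in ereal.\<close>
definition upper_exponent :: "(real \<Rightarrow> real) \<Rightarrow> ereal" where
  "upper_exponent \<Phi> = (SUP t\<in>{0<..}. ereal (t * right_deriv \<Phi> t / \<Phi> t))"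

definition lower_exponent :: "(real \<Rightarrow> real) \<Rightarrow> ereal" where
  "lower_exponent \<Phi> = (INF t\<in>{0<..}. ereal (t * right_deriv \<Phi> t / \<Phi> t))"

definition modular :: "(real \<Rightarrow> real) \<Rightarrow> ('a::euclidean_space \<Rightarrow> real) \<Rightarrow> ennreal" where
  "modular \<Phi> f = (\<integral>\<^sup>+ x. ennreal (\<Phi> \<bar>f x\<bar>) \<partial>lebesgue)"

text \<open>Luxemburg norm, with value \<infinity> when no admissible \<lambda> exists.\<close>
definition luxemburg_norm :: "(real \<Rightarrow> real) \<Rightarrow> ('a::euclidean_space \<Rightarrow> real) \<Rightarrow> ereal" where
  "luxemburg_norm \<Phi> f = Inf {ereal l | l. l > 0 \<and> modular \<Phi> (\<lambda>x. f x / l) \<le> 1}"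

definition orlicz_space :: "(real \<Rightarrow> real) \<Rightarrow> ('a::euclidean_space \<Rightarrow> real) set" where
  "orlicz_space \<Phi> = {f. f \<in> borel_measurable lebesgue \<and> luxemburg_norm \<Phi> f < \<infinity>}"

definition lp_space :: "real \<Rightarrow> ('a::euclidean_space \<Rightarrow> real) set" where
  "lp_space p = {f. f \<in> borel_measurable lebesgue \<and>
                    (\<integral>\<^sup>+ x. ennreal (\<bar>f x\<bar> powr p) \<partial>lebesgue) < \<infinity>}"

end

(* For k >= 0 the Young function Phi(t) = t^p + k max(0, t - 1) satisfies
   t^p <= Phi(t) <= (1 + k) t^p, so its Orlicz space is L^p.  The kink at t = 1 makes the index
   t Phi'(t) / Phi(t) equal to p + k there, while at a fixed s > 1 the index tends to s / (s - 1)
   as k grows, and s / (s - 1) < p1 once s > p1 / (p1 - 1).  So for k large one function Phi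
   serves as both Phi and Psi. *)

theory Submission
  imports Defs "HOL-Real_Asymp.Real_Asymp"
begin

lemma convex_on_powr_nonneg:
  assumes "p \<ge> 1"
  shows "convex_on {0..} (\<lambda>x::real. x powr p)"
proof (rule convex_on_linorderI)
  fix t x y :: real
  assume t: "0 < t" "t < 1" and xy: "x \<in> {0..}" "y \<in> {0..}" "x < y"
  show "((1 - t) *\<^sub>R x + t *\<^sub>R y) powr p \<le> (1 - t) * x powr p + t * y powr p"
  proof (cases "x = 0")
    case True
    have "(t * y) powr p = t powr p * y powr p"
      using t xy by (simp add: powr_mult)
    also have "\<dots> \<le> t powr 1 * y powr p"
      using t assms by (intro mult_right_mono powr_mono') auto
    finally show ?thesis
      using True t assms by simp
  next
    case False
    then show ?thesis
      using convex_onD[OF powr_convex[OF assms], of t x y] t xy by auto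
  qed
qed simp

lemma convex_on_ramp: "convex_on UNIV (\<lambda>x::real. max 0 (x - a))"
proof (rule convex_onI)
  fix t x y :: real
  assume t: "0 < t" "t < 1"
  have "(1 - t) * x + t * y - a = (1 - t) * (x - a) + t * (y - a)"
    by (simp add: algebra_simps)
  also have "\<dots> \<le> (1 - t) * max 0 (x - a) + t * max 0 (y - a)"
    using t by (intro add_mono mult_left_mono) auto
  finally show "max 0 ((1 - t) *\<^sub>R x + t *\<^sub>R y - a) \<le> (1 - t) * max 0 (x - a) + t * max 0 (y - a)"
    using t by simp
qed simp

lemma right_deriv_eqI:
  assumes "(g has_real_derivative D) (at t within {t<..})"
    and "\<And>s. s \<ge> t \<Longrightarrow> f s = g s"
  shows "right_deriv f t = D"
proof -
  have "\<forall>\<^sub>F s in at_right t. (g s - g t) / (s - t) = (f s - f t) / (s - t)"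
    using eventually_at_right_less[of t] by eventually_elim (simp add: assms(2))
  moreover have "((\<lambda>s. (g s - g t) / (s - t)) \<longlongrightarrow> D) (at_right t)"
    using assms(1) by (simp add: has_field_derivative_iff)
  ultimately have "((\<lambda>s. (f s - f t) / (s - t)) \<longlongrightarrow> D) (at_right t)"
    by (rule tendsto_cong[THEN iffD1])
  then show ?thesis
    unfolding right_deriv_def by (intro tendsto_Lim) auto
qed

lemma orlicz_space_subset_lp_space:
  assumes [measurable]: "\<Phi> \<in> borel_measurable borel"
    and "a > 0" and lower: "\<And>t. t \<ge> 0 \<Longrightarrow> a * t powr p \<le> \<Phi> t"
  shows "orlicz_space \<Phi> \<subseteq> (lp_space p :: ('a::euclidean_space \<Rightarrow> real) set)"
proof
  fix f :: "'a \<Rightarrow> real"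
  assume "f \<in> orlicz_space \<Phi>"
  then have [measurable]: "f \<in> borel_measurable lebesgue"
    and "luxemburg_norm \<Phi> f < \<infinity>"
    unfolding orlicz_space_def by auto
  then have "{ereal l | l. l > 0 \<and> modular \<Phi> (\<lambda>x. f x / l) \<le> 1} \<noteq> {}"
    unfolding luxemburg_norm_def by (metis Inf_empty less_irrefl top_ereal_def)
  then obtain l where l: "l > 0" and modular_le: "modular \<Phi> (\<lambda>x. f x / l) \<le> 1"
    by auto
  have "(\<integral>\<^sup>+ x. ennreal (\<bar>f x\<bar> powr p) \<partial>lebesgue)
      \<le> (\<integral>\<^sup>+ x. ennreal (l powr p / a) * ennreal (\<Phi> \<bar>f x / l\<bar>) \<partial>lebesgue)"
  proof (intro nn_integral_mono)
    fix x
    have "\<bar>f x\<bar> powr p = l powr p * \<bar>f x / l\<bar> powr p"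
      using l by (simp add: abs_divide powr_divide)
    also have "\<dots> = l powr p / a * (a * \<bar>f x / l\<bar> powr p)"
      using \<open>a > 0\<close> by simp
    also have "\<dots> \<le> l powr p / a * \<Phi> \<bar>f x / l\<bar>"
      using \<open>a > 0\<close> by (intro mult_left_mono lower) simp_all
    finally show "ennreal (\<bar>f x\<bar> powr p) \<le> ennreal (l powr p / a) * ennreal (\<Phi> \<bar>f x / l\<bar>)"
      using \<open>a > 0\<close> by (simp add: ennreal_mult'[symmetric] ennreal_leI)
  qed
  also have "\<dots> = ennreal (l powr p / a) * modular \<Phi> (\<lambda>x. f x / l)"
    unfolding modular_def by (rule nn_integral_cmult) measurable
  also have "\<dots> \<le> ennreal (l powr p / a) * 1"
    using modular_le by (rule mult_left_mono) simp
  also have "\<dots> < \<infinity>"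
    by simp
  finally show "f \<in> lp_space p"
    unfolding lp_space_def by simp
qed

lemma lp_space_subset_orlicz_space:
  assumes [measurable]: "\<Phi> \<in> borel_measurable borel"
    and "p > 0" and "b \<ge> 0" and upper: "\<And>t. t \<ge> 0 \<Longrightarrow> \<Phi> t \<le> b * t powr p"
  shows "(lp_space p :: ('a::euclidean_space \<Rightarrow> real) set) \<subseteq> orlicz_space \<Phi>"
proof
  fix f :: "'a \<Rightarrow> real"
  assume "f \<in> lp_space p"
  then have [measurable]: "f \<in> borel_measurable lebesgue"
    and "(\<integral>\<^sup>+ x. ennreal (\<bar>f x\<bar> powr p) \<partial>lebesgue) < \<infinity>"
    unfolding lp_space_def by auto
  then obtain r where "r \<ge> 0" and r: "(\<integral>\<^sup>+ x. ennreal (\<bar>f x\<bar> powr p) \<partial>lebesgue) = ennreal r"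
    by (metis ennreal_cases less_irrefl infinity_ennreal_def)
  define l where "l = (b * r + 1) powr (1 / p)"
  have "b * r + 1 > 0"
    using \<open>b \<ge> 0\<close> \<open>r \<ge> 0\<close> by (simp add: add_nonneg_pos)
  then have "l > 0" and l_powr: "l powr p = b * r + 1"
    using \<open>p > 0\<close> by (simp_all add: l_def powr_powr)
  have "modular \<Phi> (\<lambda>x. f x / l)
      \<le> (\<integral>\<^sup>+ x. ennreal (b / l powr p) * ennreal (\<bar>f x\<bar> powr p) \<partial>lebesgue)"
    unfolding modular_def
  proof (intro nn_integral_mono)
    fix x
    have "\<Phi> \<bar>f x / l\<bar> \<le> b / l powr p * \<bar>f x\<bar> powr p"
      using upper[of "\<bar>f x / l\<bar>"] \<open>l > 0\<close> by (simp add: abs_divide powr_divide)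
    then show "ennreal (\<Phi> \<bar>f x / l\<bar>) \<le> ennreal (b / l powr p) * ennreal (\<bar>f x\<bar> powr p)"
      using \<open>b \<ge> 0\<close> by (simp add: ennreal_mult'[symmetric] ennreal_leI)
  qed
  also have "\<dots> = ennreal (b / l powr p) * ennreal r"
    by (subst nn_integral_cmult) (simp_all add: r)
  also have "\<dots> = ennreal (b * r / (b * r + 1))"
    using \<open>b \<ge> 0\<close> \<open>r \<ge> 0\<close> by (simp add: l_powr ennreal_mult'[symmetric])
  also have "\<dots> \<le> 1"
    using \<open>b * r + 1 > 0\<close> by (simp add: ennreal_le_1)
  finally have "luxemburg_norm \<Phi> f \<le> ereal l"
    unfolding luxemburg_norm_def using \<open>l > 0\<close> by (intro Inf_lower) auto
  also have "\<dots> < \<infinity>"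
    by simp
  finally show "f \<in> orlicz_space \<Phi>"
    unfolding orlicz_space_def by simp
qed

definition kinked_power :: "real \<Rightarrow> real \<Rightarrow> real \<Rightarrow> real" where
  "kinked_power p k t = t powr p + k * max 0 (t - 1)"

lemma kinked_power_bounds:
  assumes "p \<ge> 1" "k \<ge> 0" "t \<ge> 0"
  shows "t powr p \<le> kinked_power p k t" "kinked_power p k t \<le> (1 + k) * t powr p"
proof -
  show "t powr p \<le> kinked_power p k t"
    unfolding kinked_power_def using assms by simp
  have "max 0 (t - 1) \<le> t powr p"
  proof (cases "t \<ge> 1")
    case True
    then have "t - 1 \<le> t powr 1"
      by simp
    also have "\<dots> \<le> t powr p"
      using True assms by (intro powr_mono) auto
    finally show ?thesis
      by simp
  qed simp
  then show "kinked_power p k t \<le> (1 + k) * t powr p"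
    unfolding kinked_power_def using assms by (simp add: algebra_simps mult_left_mono)
qed

lemma young_function_kinked_power:
  assumes "p \<ge> 1" "k \<ge> 0"
  shows "young_function (kinked_power p k)"
  unfolding young_function_def
proof (intro conjI allI impI)
  show "convex_on {0..} (kinked_power p k)"
    unfolding kinked_power_def using convex_on_powr_nonneg[OF assms(1)] assms(2)
    by (intro convex_on_add convex_on_cmul convex_on_subset[OF convex_on_ramp]) auto
  show "kinked_power p k 0 = 0"
    by (simp add: kinked_power_def)
  show "kinked_power p k t > 0" if "t > 0" for t
  proof -
    have "0 < t powr p"
      using that by simp
    then show ?thesis
      using kinked_power_bounds(1)[OF assms, of t] that by linarith
  qed
  have "\<forall>\<^sub>F t in at_top. t \<le> kinked_power p k t"
    using eventually_ge_at_top[of 1]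
  proof eventually_elim
    case (elim t)
    then have "t \<le> t powr p"
      using powr_mono[of 1 p t] assms by simp
    also have "\<dots> \<le> kinked_power p k t"
      using kinked_power_bounds(1)[OF assms] elim by simp
    finally show ?case .
  qed
  then show "filterlim (kinked_power p k) at_top at_top"
    by (rule filterlim_at_top_mono[OF filterlim_ident])
qed

lemma orlicz_space_kinked_power:
  assumes "p \<ge> 1" "k \<ge> 0"
  shows "orlicz_space (kinked_power p k) = (lp_space p :: ('a::euclidean_space \<Rightarrow> real) set)"
proof -
  have "kinked_power p k \<in> borel_measurable borel"
    unfolding kinked_power_def by measurable
  then show ?thesis
    using kinked_power_bounds[OF assms] assms
    by (intro subset_antisym orlicz_space_subset_lp_space[where a = 1]
        lp_space_subset_orlicz_space[where b = "1 + k"]) auto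
qed

lemma right_deriv_kinked_power:
  assumes "s \<ge> 1"
  shows "right_deriv (kinked_power p k) s = p * s powr (p - 1) + k"
  by (rule right_deriv_eqI[where g = "\<lambda>t. t powr p + k * (t - 1)"])
     (use assms in \<open>auto intro!: derivative_eq_intros simp: kinked_power_def\<close>)

lemma upper_exponent_kinked_power_ge: "ereal (p + k) \<le> upper_exponent (kinked_power p k)"
proof -
  have "p + k = 1 * right_deriv (kinked_power p k) 1 / kinked_power p k 1"
    by (simp add: right_deriv_kinked_power kinked_power_def)
  also have "ereal \<dots> \<le> upper_exponent (kinked_power p k)"
    unfolding upper_exponent_def by (intro SUP_upper) auto
  finally show ?thesis .
qed

lemma eventually_lower_exponent_kinked_power_less:
  assumes "q > 1"
  shows "\<forall>\<^sub>F k in at_top. lower_exponent (kinked_power p k) < ereal q"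
proof -
  define s where "s = 2 * q / (q - 1)"
  have "s > 1" and "s - 1 = (q + 1) / (q - 1)"
    using assms by (simp_all add: s_def field_simps)
  then have "s / (s - 1) = 2 * q / (q + 1)"
    using assms by (simp add: s_def)
  also have "\<dots> < q"
    using mult_strict_left_mono[of 1 q q] assms by (simp add: field_simps)
  finally have "s / (s - 1) < q" .
  define ratio where "ratio k = s * (p * s powr (p - 1) + k) / (s powr p + k * (s - 1))" for k
  have "(ratio \<longlongrightarrow> s / (s - 1)) at_top"
    unfolding ratio_def using \<open>s > 1\<close> by real_asymp (simp add: divide_inverse)
  then have "\<forall>\<^sub>F k in at_top. ratio k < q"
    using \<open>s / (s - 1) < q\<close> by (rule order_tendstoD)
  then show ?thesis
  proof eventually_elim
    case (elim k)
    have "lower_exponent (kinked_power p k) \<le> ereal (ratio k)"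
      unfolding lower_exponent_def ratio_def using \<open>s > 1\<close>
      by (intro INF_lower2[of s]) (auto simp: right_deriv_kinked_power kinked_power_def)
    also have "\<dots> < ereal q"
      using elim by simp
    finally show ?case .
  qed
qed

theorem mainTheorem6:
  fixes p1 p p2 :: real
  assumes "1 < p1" and "p1 < p" and "p < p2"
  shows "\<exists>\<Phi> \<Psi>. young_function \<Phi> \<and> young_function \<Psi> \<and>
           lower_exponent \<Phi> < ereal p1 \<and> upper_exponent \<Psi> > ereal p2 \<and>
           orlicz_space \<Phi> = (lp_space p :: ('a::euclidean_space \<Rightarrow> real) set) \<and>
           orlicz_space \<Psi> = (lp_space p :: ('a \<Rightarrow> real) set)"
proof -
  have "\<forall>\<^sub>F k in at_top. 0 \<le> k \<and> p2 - p < k \<and> lower_exponent (kinked_power p k) < ereal p1"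
    using assms(1) by (intro eventually_conj eventually_ge_at_top eventually_gt_at_top
        eventually_lower_exponent_kinked_power_less)
  then obtain k where "0 \<le> k" "p2 - p < k" and lower: "lower_exponent (kinked_power p k) < ereal p1"
    using eventually_happens' trivial_limit_at_top_linorder by blast
  have "ereal p2 < ereal (p + k)"
    using \<open>p2 - p < k\<close> by simp
  also have "\<dots> \<le> upper_exponent (kinked_power p k)"
    by (rule upper_exponent_kinked_power_ge)
  finally have upper: "ereal p2 < upper_exponent (kinked_power p k)" .
  have "p \<ge> 1"
    using assms by simp
  then show ?thesis
    using young_function_kinked_power orlicz_space_kinked_power lower upper \<open>0 \<le> k\<close> by blast
qed

end
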